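(* Let $(N,J,h)$ be a 2-dimensional almost Norden manifold and let $(\mathcal{C}(N),\varphi,\xi,\eta,g)$ be the cone over it (constructed as in the context). Then: (1) $(\mathcal{C}(N),\varphi,\xi,\eta,g)$ is an isotropic-cosymplectic B-metric manifold if and only if the square norm of $\nabla'J$ on $(N,J,h)$ satisfies $\|\nabla'J\|^2=4$; (2) $(N,J,h)$ is an isotropic-K\"ahler-Norden manifold if and only if the square norm of $\nabla\varphi$ on $(\mathcal{C}(N),\varphi,\xi,\eta,g)$ satisfies $\|\nabla\varphi\|^2=-\frac{4}{t^2}$.
   Context: An almost Norden manifold $(N,J,h)$ is a manifold $N$ with an almost complex structure $J$ and a pseudo-Riemannian metric $h$ satisfying $h(Jx,Jy)=-h(x,y)$; $\nabla'$ denotes the Levi-Civita connection of $h$. The cone is $\mathcal{C}(N)=\mathbb{R}^+\times N$, $t$ the coordinate on $\mathbb{R}^+=(0,\infty)$, with metric $g=t^2h+\mathrm{d}t^2$ and structure $\xi=\tfrac{\mathrm{d}}{\mathrm{d}t}$, $\eta=\mathrm{d}t$, $\varphi=J$ on vectors tangent to $N$, $\varphi\xi=0$; it is an almost contact B-metric manifold, i.e. $\varphi\xi=0$, $\varphi^2=-\mathrm{Id}+\eta\otimes\xi$, $\eta\circ\varphi=0$, $\eta(\xi)=1$, $g(\varphi x,\varphi y)=-g(x,y)+\eta(x)\eta(y)$. $\nabla$ is the Levi-Civita connection of $g$. With respect to a basis $\{e_i\}$ of a tangent space and the inverse matrices $(g^{ij})$, $(h^{ij})$ of the metric components, the square norms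 are $\|\nabla\varphi\|^2=g^{ij}g^{ks}g((\nabla_{e_i}\varphi)e_k,(\nabla_{e_j}\varphi)e_s)$ and $\|\nabla'J\|^2=h^{ij}h^{ks}h((\nabla'_{e_i}J)e_k,(\nabla'_{e_j}J)e_s)$ (summation convention). An almost contact B-metric manifold is isotropic-cosymplectic if $\|\nabla\varphi\|^2=0$; an almost Norden manifold is isotropic-K\"ahler-Norden if $\|\nabla'J\|^2=0$. *)

theory Defs
  imports "HOL-Analysis.Analysis"
begin

text \<open>A point of a coordinate chart is a vector in real^'n;
  a (0,2)-tensor field G is given by its components G p i j = G(e_i,e_j) at p, and a
  (1,1)-tensor field A by its components with A(e_j) = sum over a of A p a j e_a.\<close>

definition pd :: "(real^'n \<Rightarrow> real) \<Rightarrow> real^'n \<Rightarrow> 'n \<Rightarrow> real" where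
  "pd f p k = deriv (\<lambda>s. f (p + s *\<^sub>R axis k 1)) 0"

definition inv_metric :: "(real^'n \<Rightarrow> 'n \<Rightarrow> 'n \<Rightarrow> real) \<Rightarrow> real^'n \<Rightarrow> 'n \<Rightarrow> 'n \<Rightarrow> real" where
  "inv_metric G p i j = matrix_inv (\<chi> a b. G p a b) $ i $ j"

text \<open>Christoffel symbols of the Levi-Civita connection: nabla_{e_i} e_j = sum_k Gamma^k_ij e_k.\<close>
definition christoffel :: "(real^'n \<Rightarrow> 'n \<Rightarrow> 'n \<Rightarrow> real) \<Rightarrow> real^'n \<Rightarrow> 'n \<Rightarrow> 'n \<Rightarrow> 'n \<Rightarrow> real" where
  "christoffel G p k i j = (1/2) * (\<Sum>l\<in>UNIV. inv_metric G p k l *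
      (pd (\<lambda>q. G q j l) p i + pd (\<lambda>q. G q i l) p j - pd (\<lambda>q. G q i j) p l))"

text \<open>Component k of ((nabla_{e_i} A) e_j).\<close>
definition cov_deriv :: "(real^'n \<Rightarrow> 'n \<Rightarrow> 'n \<Rightarrow> real) \<Rightarrow> (real^'n \<Rightarrow> 'n \<Rightarrow> 'n \<Rightarrow> real)
     \<Rightarrow> real^'n \<Rightarrow> 'n \<Rightarrow> 'n \<Rightarrow> 'n \<Rightarrow> real" where
  "cov_deriv G A p i k j = pd (\<lambda>q. A q k j) p i
      + (\<Sum>m\<in>UNIV. christoffel G p k i m * A p m j)
      - (\<Sum>m\<in>UNIV. christoffel G p m i j * A p k m)"

definition sq_norm_cov :: "(real^'n \<Rightarrow> 'n \<Rightarrow> 'n \<Rightarrow> real) \<Rightarrow> (real^'n \<Rightarrow> 'n \<Rightarrow> 'n \<Rightarrow> real)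
     \<Rightarrow> real^'n \<Rightarrow> real" where
  "sq_norm_cov G A p = (\<Sum>i\<in>UNIV. \<Sum>j\<in>UNIV. \<Sum>k\<in>UNIV. \<Sum>s\<in>UNIV.
      inv_metric G p i j * inv_metric G p k s *
      (\<Sum>a\<in>UNIV. \<Sum>b\<in>UNIV. G p a b * cov_deriv G A p i a k * cov_deriv G A p j b s))"

definition almost_norden_on :: "(real^'n) set \<Rightarrow> (real^'n \<Rightarrow> 'n \<Rightarrow> 'n \<Rightarrow> real)
     \<Rightarrow> (real^'n \<Rightarrow> 'n \<Rightarrow> 'n \<Rightarrow> real) \<Rightarrow> bool" where
  "almost_norden_on U J h \<longleftrightarrow> open U \<and>
     (\<forall>i j. (\<lambda>q. h q i j) differentiable_on U \<and> (\<lambda>q. J q i j) differentiable_on U) \<and>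
     (\<forall>p\<in>U. (\<forall>i j. h p i j = h p j i) \<and> invertible (\<chi> a b. h p a b) \<and>
        (\<forall>i j. (\<Sum>k\<in>UNIV. J p i k * J p k j) = - (if i = j then 1 else 0)) \<and>
        (\<forall>i j. (\<Sum>a\<in>UNIV. \<Sum>b\<in>UNIV. h p a b * J p a i * J p b j) = - h p i j))"

text \<open>The cone R^+ x N in coordinates (t, x): index Inl () is the t-direction.\<close>
definition cone_pt :: "real \<Rightarrow> real^'n \<Rightarrow> real^(unit + 'n)" where
  "cone_pt t x = (\<chi> a. case a of Inl _ \<Rightarrow> t | Inr i \<Rightarrow> x $ i)"

definition cone_base :: "real^(unit + 'n) \<Rightarrow> real^'n" where
  "cone_base c = (\<chi> i. c $ Inr i)"

definition cone_metric :: "(real^'n \<Rightarrow> 'n \<Rightarrow> 'n \<Rightarrow> real) \<Rightarrow> real^(unit + 'n)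
     \<Rightarrow> unit + 'n \<Rightarrow> unit + 'n \<Rightarrow> real" where
  "cone_metric h c a b = (case (a, b) of
      (Inl _, Inl _) \<Rightarrow> 1
    | (Inr i, Inr j) \<Rightarrow> (c $ Inl ())^2 * h (cone_base c) i j
    | _ \<Rightarrow> 0)"

definition cone_phi :: "(real^'n \<Rightarrow> 'n \<Rightarrow> 'n \<Rightarrow> real) \<Rightarrow> real^(unit + 'n)
     \<Rightarrow> unit + 'n \<Rightarrow> unit + 'n \<Rightarrow> real" where
  "cone_phi J c a b = (case (a, b) of
      (Inr i, Inr j) \<Rightarrow> J (cone_base c) i j
    | _ \<Rightarrow> 0)"

definition isotropic_cosymplectic_cone :: "(real^'n) set \<Rightarrow> (real^'n \<Rightarrow> 'n \<Rightarrow> 'n \<Rightarrow> real)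
     \<Rightarrow> (real^'n \<Rightarrow> 'n \<Rightarrow> 'n \<Rightarrow> real) \<Rightarrow> bool" where
  "isotropic_cosymplectic_cone U J h \<longleftrightarrow>
     (\<forall>t>0. \<forall>x\<in>U. sq_norm_cov (cone_metric h) (cone_phi J) (cone_pt t x) = 0)"

definition isotropic_kaehler_norden :: "(real^'n) set \<Rightarrow> (real^'n \<Rightarrow> 'n \<Rightarrow> 'n \<Rightarrow> real)
     \<Rightarrow> (real^'n \<Rightarrow> 'n \<Rightarrow> 'n \<Rightarrow> real) \<Rightarrow> bool" where
  "isotropic_kaehler_norden U J h \<longleftrightarrow> (\<forall>x\<in>U. sq_norm_cov h J x = 0)"

end

theory Submission
  imports Defs
begin

text \<open>At a point (t, x) of the cone the radial derivative of \<open>\<phi>\<close> vanishes, while for X, Y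
  tangent to N one has \<open>(\<nabla>\<^sub>X \<phi>) Y = (\<nabla>'\<^sub>X J) Y - t \<tilde>h(X, Y) \<xi>\<close> and \<open>(\<nabla>\<^sub>X \<phi>) \<xi> = -JX / t\<close>,
  where \<open>\<tilde>h(X, Y) = h(X, JY)\<close> is the associated metric. Contracting with \<open>g\<^sup>-\<^sup>1\<close> gives
  \<open>\<parallel>\<nabla>\<phi>\<parallel>\<^sup>2 = (\<parallel>\<nabla>'J\<parallel>\<^sup>2 + h\<^sup>i\<^sup>j h\<^sup>k\<^sup>s \<tilde>h\<^sub>i\<^sub>k \<tilde>h\<^sub>j\<^sub>s + h\<^sup>i\<^sup>j h(Je\<^sub>i, Je\<^sub>j)) / t\<^sup>2\<close>, and the Norden identities
  \<open>J\<^sup>2 = -1\<close>, \<open>h(J\<cdot>, J\<cdot>) = -h\<close> make each of the two extra contractions equal to \<open>-dim N\<close>.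
  Hence \<open>\<parallel>\<nabla>\<phi>\<parallel>\<^sup>2 = (\<parallel>\<nabla>'J\<parallel>\<^sup>2 - 2 dim N) / t\<^sup>2\<close>, and for \<open>dim N = 2\<close> both equivalences follow.\<close>

section \<open>Linear algebra of a Norden form\<close>

lemma sum_rotate3:
  "(\<Sum>m\<in>A. \<Sum>a\<in>B. \<Sum>b\<in>C. f m a b) = (\<Sum>a\<in>B. \<Sum>b\<in>C. \<Sum>m\<in>A. f m a b)"
  by (subst sum.swap) (simp only: sum.swap[of _ A C])

definition assoc_metric ::
    "('n::finite \<Rightarrow> 'n \<Rightarrow> real) \<Rightarrow> ('n \<Rightarrow> 'n \<Rightarrow> real) \<Rightarrow> 'n \<Rightarrow> 'n \<Rightarrow> real" where
  "assoc_metric h J i k = (\<Sum>m\<in>UNIV. h i m * J m k)"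

locale norden_form =
  fixes h h_inv J :: "'n::finite \<Rightarrow> 'n \<Rightarrow> real"
  assumes h_inv_right: "\<And>i j. (\<Sum>k\<in>UNIV. h i k * h_inv k j) = (if i = j then 1 else 0)"
    and h_inv_left: "\<And>i j. (\<Sum>k\<in>UNIV. h_inv i k * h k j) = (if i = j then 1 else 0)"
    and h_sym: "\<And>i j. h i j = h j i"
    and J_square: "\<And>i j. (\<Sum>k\<in>UNIV. J i k * J k j) = - (if i = j then 1 else 0)"
    and h_J_J: "\<And>i j. (\<Sum>a\<in>UNIV. \<Sum>b\<in>UNIV. h a b * J a i * J b j) = - h i j"
begin

lemma assoc_metric_sym: "assoc_metric h J k i = assoc_metric h J i k"
proof -
  have "assoc_metric h J k i = (\<Sum>m\<in>UNIV. (- (\<Sum>a\<in>UNIV. \<Sum>b\<in>UNIV. h a b * J a k * J b m)) * J m i)"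
    unfolding assoc_metric_def by (simp add: h_J_J)
  also have "\<dots> = - (\<Sum>m\<in>UNIV. \<Sum>a\<in>UNIV. \<Sum>b\<in>UNIV. h a b * J a k * (J b m * J m i))"
    by (simp only: sum_distrib_right sum_negf mult_minus_left mult.assoc)
  also have "\<dots> = - (\<Sum>a\<in>UNIV. \<Sum>b\<in>UNIV. h a b * J a k * (\<Sum>m\<in>UNIV. J b m * J m i))"
    by (subst sum_rotate3) (simp only: sum_distrib_left)
  also have "\<dots> = (\<Sum>a\<in>UNIV. h a i * J a k)"
    by (simp add: J_square sum_negf if_distrib cong: if_cong)
  also have "\<dots> = assoc_metric h J i k"
    unfolding assoc_metric_def by (intro sum.cong refl) (simp add: h_sym[of _ i] mult.commute)
  finally show ?thesis .
qed

lemma raise_first_index_assoc_metric: "(\<Sum>i\<in>UNIV. h_inv i j * assoc_metric h J i k) = J j k"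
proof -
  have "(\<Sum>i\<in>UNIV. h_inv i j * assoc_metric h J i k) = (\<Sum>m\<in>UNIV. (\<Sum>i\<in>UNIV. h m i * h_inv i j) * J m k)"
    unfolding assoc_metric_def sum_distrib_left sum_distrib_right
    by (subst sum.swap) (intro sum.cong refl, simp add: h_sym[of _ m for m] mult_ac)
  also have "\<dots> = J j k"
    by (simp add: h_inv_right if_distrib[of "\<lambda>x. x * _"] cong: if_cong)
  finally show ?thesis .
qed

lemma raise_second_index_assoc_metric: "(\<Sum>s\<in>UNIV. h_inv k s * assoc_metric h J j s) = J k j"
proof -
  have "(\<Sum>s\<in>UNIV. h_inv k s * assoc_metric h J j s) = (\<Sum>s\<in>UNIV. h_inv k s * assoc_metric h J s j)"
    by (metis assoc_metric_sym)
  also have "\<dots> = (\<Sum>m\<in>UNIV. (\<Sum>s\<in>UNIV. h_inv k s * h s m) * J m j)"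
    unfolding assoc_metric_def sum_distrib_left sum_distrib_right
    by (subst sum.swap) (simp only: mult.assoc)
  also have "\<dots> = J k j"
    by (simp add: h_inv_left if_distrib[of "\<lambda>x. x * _"] cong: if_cong)
  finally show ?thesis .
qed

lemma trace_h_J_J:
  "(\<Sum>i\<in>UNIV. \<Sum>j\<in>UNIV. h_inv i j * (\<Sum>a\<in>UNIV. \<Sum>b\<in>UNIV. h a b * J a i * J b j))
    = - real CARD('n)"
proof -
  have "(\<Sum>i\<in>UNIV. \<Sum>j\<in>UNIV. h_inv i j * (\<Sum>a\<in>UNIV. \<Sum>b\<in>UNIV. h a b * J a i * J b j))
      = - (\<Sum>i\<in>UNIV. \<Sum>j\<in>UNIV. h_inv i j * h j i)"
    by (simp only: h_J_J h_sym[of _ i for i] sum_negf mult_minus_right)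
  then show ?thesis by (simp add: h_inv_left)
qed

lemma trace_assoc_metric_square:
  "(\<Sum>i\<in>UNIV. \<Sum>j\<in>UNIV. \<Sum>k\<in>UNIV. \<Sum>s\<in>UNIV. h_inv i j * h_inv k s * (assoc_metric h J i k * assoc_metric h J j s))
    = - real CARD('n)"
proof -
  have "(\<Sum>i\<in>UNIV. \<Sum>j\<in>UNIV. \<Sum>k\<in>UNIV. \<Sum>s\<in>UNIV. h_inv i j * h_inv k s * (assoc_metric h J i k * assoc_metric h J j s))
      = (\<Sum>j\<in>UNIV. \<Sum>k\<in>UNIV. \<Sum>i\<in>UNIV. \<Sum>s\<in>UNIV. (h_inv i j * assoc_metric h J i k) * (h_inv k s * assoc_metric h J j s))"
    by (subst sum_rotate3) (simp only: mult_ac)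
  also have "\<dots> = (\<Sum>j\<in>UNIV. \<Sum>k\<in>UNIV. (\<Sum>i\<in>UNIV. h_inv i j * assoc_metric h J i k) * (\<Sum>s\<in>UNIV. h_inv k s * assoc_metric h J j s))"
    by (simp only: sum_product)
  also have "\<dots> = (\<Sum>j\<in>UNIV. \<Sum>k\<in>UNIV. J j k * J k j)"
    by (simp only: raise_first_index_assoc_metric raise_second_index_assoc_metric)
  also have "\<dots> = - real CARD('n)"
    by (simp add: J_square sum_negf)
  finally show ?thesis .
qed

end

section \<open>Coordinates on the cone\<close>

lemma sum_UNIV_unit_plus:
  "(\<Sum>a\<in>(UNIV::(unit + 'n::finite) set). f a) = f (Inl ()) + (\<Sum>i\<in>UNIV. f (Inr i))"
proof -
  have "(\<Sum>a\<in>(UNIV::(unit + 'n) set). f a) = (\<Sum>a\<in>UNIV <+> UNIV. f a)"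
    by simp
  also have "\<dots> = (\<Sum>u\<in>UNIV. f (Inl u)) + (\<Sum>i\<in>UNIV. f (Inr i))"
    by (subst sum.Plus) (auto simp: o_def)
  finally show ?thesis
    by (simp add: UNIV_unit)
qed

lemma matrix_inv_right: "invertible A \<Longrightarrow> A ** matrix_inv A = mat 1"
  and matrix_inv_left: "invertible A \<Longrightarrow> matrix_inv A ** A = mat 1"
  unfolding invertible_def matrix_inv_def by (metis (mono_tags, lifting) someI_ex)+

lemma matrix_inv_unique:
  fixes A B :: "'a::comm_ring_1^'n^'n"
  assumes "A ** B = mat 1" and "B ** A = mat 1"
  shows "matrix_inv A = B"
proof -
  have "matrix_inv A = (matrix_inv A ** A) ** B"
    by (metis assms(1) matrix_mul_assoc matrix_mul_rid)
  also have "\<dots> = B"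
    using assms matrix_inv_left[of A] invertible_def by (metis matrix_mul_lid)
  finally show ?thesis .
qed

lemma inv_metric_right:
  "invertible (\<chi> a b. G p a b) \<Longrightarrow> (\<Sum>k\<in>UNIV. G p i k * inv_metric G p k j) = (if i = j then 1 else 0)"
  using matrix_inv_right[of "\<chi> a b. G p a b"]
  by (auto simp: vec_eq_iff matrix_matrix_mult_def mat_def inv_metric_def)

lemma inv_metric_left:
  "invertible (\<chi> a b. G p a b) \<Longrightarrow> (\<Sum>k\<in>UNIV. inv_metric G p i k * G p k j) = (if i = j then 1 else 0)"
  using matrix_inv_left[of "\<chi> a b. G p a b"]
  by (auto simp: vec_eq_iff matrix_matrix_mult_def mat_def inv_metric_def)

lemma almost_norden_on_norden_form:
  assumes "almost_norden_on U J h" and "x \<in> U"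
  shows "norden_form (h x) (inv_metric h x) (J x)"
  using assms inv_metric_right[of h x] inv_metric_left[of h x]
  unfolding almost_norden_on_def norden_form_def by auto

lemma almost_norden_on_differentiable_at:
  "almost_norden_on U J h \<Longrightarrow> x \<in> U \<Longrightarrow> (\<lambda>q. h q i j) differentiable at x"
  unfolding almost_norden_on_def using differentiable_on_eq_differentiable_at by blast

lemma cone_pt_Inl [simp]: "cone_pt t x $ Inl u = t"
  by (simp add: cone_pt_def)

lemma cone_pt_Inr [simp]: "cone_pt t x $ Inr i = x $ i"
  by (simp add: cone_pt_def)

lemma cone_base_cone_pt [simp]: "cone_base (cone_pt t x) = x"
  by (simp add: cone_base_def vec_eq_iff)

lemma cone_metric_cone_pt:
  "cone_metric h (cone_pt t x) a b =
     (case (a, b) of (Inl _, Inl _) \<Rightarrow> 1 | (Inr i, Inr j) \<Rightarrow> t^2 * h x i j | _ \<Rightarrow> 0)"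
  unfolding cone_metric_def cone_base_cone_pt cone_pt_Inl ..

lemma cone_phi_cone_pt:
  "cone_phi J (cone_pt t x) a b = (case (a, b) of (Inr i, Inr j) \<Rightarrow> J x i j | _ \<Rightarrow> 0)"
  unfolding cone_phi_def cone_base_cone_pt ..

lemma pd_cone_Inl: "pd F (cone_pt t x) (Inl u) = deriv (\<lambda>s. F (cone_pt (t + s) x)) 0"
proof -
  have "cone_pt t x + s *\<^sub>R axis (Inl u) 1 = cone_pt (t + s) x" for s
    unfolding vec_eq_iff by (rule allI, case_tac i) (auto simp: axis_def)
  then show ?thesis
    by (simp add: pd_def)
qed

lemma pd_cone_Inr: "pd F (cone_pt t x) (Inr k) = pd (\<lambda>y. F (cone_pt t y)) x k"
proof -
  have "cone_pt t x + s *\<^sub>R axis (Inr k) 1 = cone_pt t (x + s *\<^sub>R axis k 1)" for s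
    unfolding vec_eq_iff by (rule allI, case_tac i) (auto simp: axis_def)
  then show ?thesis
    by (simp add: pd_def)
qed

lemma pd_const: "pd (\<lambda>y. c) x k = 0"
  by (simp add: pd_def)

lemma pd_cmult:
  assumes "f differentiable at x"
  shows "pd (\<lambda>y. c * f y) x k = c * pd f x k"
proof -
  have "(\<lambda>s::real. x + s *\<^sub>R axis k 1) differentiable at 0"
    by (auto intro!: derivative_intros)
  then have "f \<circ> (\<lambda>s. x + s *\<^sub>R axis k 1) differentiable at 0"
    by (rule differentiable_chain_at) (simp add: assms)
  then show ?thesis
    unfolding pd_def o_def
    by (metis deriv_cmult field_differentiable_def DERIV_deriv_iff_real_differentiable)
qed

lemma pd_cone_metric_Inl:
  "pd (\<lambda>q. cone_metric h q a b) (cone_pt t x) (Inl u) =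
     (case (a, b) of (Inr i, Inr j) \<Rightarrow> 2 * t * h x i j | _ \<Rightarrow> 0)"
proof (cases a; cases b)
  fix i j assume "a = Inr i" "b = Inr j"
  moreover have "((\<lambda>s. (t + s)^2 * h x i j) has_real_derivative 2 * t * h x i j) (at 0)"
    by (auto intro!: derivative_eq_intros)
  ultimately show ?thesis
    by (simp add: pd_cone_Inl cone_metric_cone_pt DERIV_imp_deriv)
qed (simp_all add: pd_cone_Inl cone_metric_cone_pt)

lemma pd_cone_metric_Inr:
  assumes "\<And>i j. (\<lambda>q. h q i j) differentiable at x"
  shows "pd (\<lambda>q. cone_metric h q a b) (cone_pt t x) (Inr k) =
     (case (a, b) of (Inr i, Inr j) \<Rightarrow> t^2 * pd (\<lambda>q. h q i j) x k | _ \<Rightarrow> 0)"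
  by (cases a; cases b) (simp_all add: pd_cone_Inr cone_metric_cone_pt pd_const pd_cmult assms)

lemma pd_cone_phi_Inl: "pd (\<lambda>q. cone_phi J q a b) (cone_pt t x) (Inl u) = 0"
  by (simp add: pd_cone_Inl cone_phi_cone_pt)

lemma pd_cone_phi_Inr:
  "pd (\<lambda>q. cone_phi J q a b) (cone_pt t x) (Inr k) =
     (case (a, b) of (Inr i, Inr j) \<Rightarrow> pd (\<lambda>q. J q i j) x k | _ \<Rightarrow> 0)"
  by (cases a; cases b) (simp_all add: pd_cone_Inr cone_phi_cone_pt pd_const)

lemma inv_metric_cone:
  fixes h :: "real^'n \<Rightarrow> 'n \<Rightarrow> 'n \<Rightarrow> real"
  assumes t: "t > 0" and inv: "invertible (\<chi> a b. h x a b)"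
  shows "inv_metric (cone_metric h) (cone_pt t x) a b =
    (case (a, b) of (Inl _, Inl _) \<Rightarrow> 1 | (Inr i, Inr j) \<Rightarrow> inv_metric h x i j / t^2 | _ \<Rightarrow> 0)"
proof -
  define G where "G = (\<chi> a b. cone_metric h (cone_pt t x) a b)"
  define N :: "real^(unit + 'n)^(unit + 'n)" where "N = (\<chi> a b. case (a, b) of
      (Inl _, Inl _) \<Rightarrow> 1 | (Inr i, Inr j) \<Rightarrow> inv_metric h x i j / t^2 | _ \<Rightarrow> 0)"
  have t2: "t^2 \<noteq> 0"
    using t by simp
  note defs = matrix_matrix_mult_def mat_def G_def N_def sum_UNIV_unit_plus cone_metric_cone_pt
  have "G ** N = mat 1"
    unfolding vec_eq_iff
  proof (intro allI)
    fix a b :: "unit + 'n"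
    show "(G ** N) $ a $ b = mat 1 $ a $ b"
    proof (cases a; cases b)
      fix i j assume "a = Inr i" "b = Inr j"
      moreover have "(\<Sum>k\<in>UNIV. t^2 * h x i k * (inv_metric h x k j / t^2))
          = (\<Sum>k\<in>UNIV. h x i k * inv_metric h x k j)"
        using t2 by (intro sum.cong) auto
      ultimately show ?thesis
        using inv_metric_right[of h x i j, OF inv] by (simp add: defs)
    qed (auto simp: defs)
  qed
  moreover have "N ** G = mat 1"
    unfolding vec_eq_iff
  proof (intro allI)
    fix a b :: "unit + 'n"
    show "(N ** G) $ a $ b = mat 1 $ a $ b"
    proof (cases a; cases b)
      fix i j assume "a = Inr i" "b = Inr j"
      moreover have "(\<Sum>k\<in>UNIV. inv_metric h x i k / t^2 * (t^2 * h x k j))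
          = (\<Sum>k\<in>UNIV. inv_metric h x i k * h x k j)"
        using t2 by (intro sum.cong) auto
      ultimately show ?thesis
        using inv_metric_left[of h x i j, OF inv] by (simp add: defs)
    qed (auto simp: defs)
  qed
  ultimately have "matrix_inv G = N"
    by (rule matrix_inv_unique)
  then show ?thesis
    by (simp add: inv_metric_def G_def N_def)
qed

lemma christoffel_cone:
  fixes h :: "real^'n \<Rightarrow> 'n \<Rightarrow> 'n \<Rightarrow> real"
  assumes t: "t > 0" and inv: "invertible (\<chi> a b. h x a b)"
    and sym: "\<And>i j. h x i j = h x j i"
    and dif: "\<And>i j. (\<lambda>q. h q i j) differentiable at x"
  shows "christoffel (cone_metric h) (cone_pt t x) a b c =
    (case a of
       Inl _ \<Rightarrow> (case (b, c) of (Inr i, Inr j) \<Rightarrow> - t * h x i j | _ \<Rightarrow> 0)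
     | Inr k \<Rightarrow> (case (b, c) of
         (Inl _, Inr j) \<Rightarrow> (if k = j then 1 / t else 0)
       | (Inr i, Inl _) \<Rightarrow> (if k = i then 1 / t else 0)
       | (Inr i, Inr j) \<Rightarrow> christoffel h x k i j
       | _ \<Rightarrow> 0))"
proof -
  note defs = christoffel_def sum_UNIV_unit_plus inv_metric_cone[where h=h and x=x, OF t inv]
    pd_cone_metric_Inl pd_cone_metric_Inr[OF dif]
  have t0: "t \<noteq> 0"
    using t by simp
  have radial: "(\<Sum>l\<in>UNIV. inv_metric h x k l * (2 * t * h x j l) / t^2) = (if k = j then 2 / t else 0)"
    for k j
  proof -
    have "(\<Sum>l\<in>UNIV. inv_metric h x k l * (2 * t * h x j l) / t^2)
        = 2 / t * (\<Sum>l\<in>UNIV. inv_metric h x k l * h x l j)"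
      unfolding sum_distrib_left using t0 by (intro sum.cong) (auto simp: sym[of j] power2_eq_square)
    then show ?thesis
      using inv_metric_left[of h x k j, OF inv] by simp
  qed
  show ?thesis
  proof (cases a; cases b; cases c)
    fix k i j assume "a = Inr k" "b = Inr i" "c = Inr j"
    moreover have "(\<Sum>l\<in>UNIV. inv_metric h x k l / t^2 * (t^2 * pd (\<lambda>q. h q j l) x i
          + t^2 * pd (\<lambda>q. h q i l) x j - t^2 * pd (\<lambda>q. h q i j) x l))
        = (\<Sum>l\<in>UNIV. inv_metric h x k l * (pd (\<lambda>q. h q j l) x i
          + pd (\<lambda>q. h q i l) x j - pd (\<lambda>q. h q i j) x l))"
      using t0 by (intro sum.cong) (auto simp: field_simps)
    ultimately show ?thesis
      by (simp add: defs)
  qed (auto simp: defs radial)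
qed

lemma cov_deriv_cone:
  fixes h :: "real^'n \<Rightarrow> 'n \<Rightarrow> 'n \<Rightarrow> real"
  assumes t: "t > 0" and inv: "invertible (\<chi> a b. h x a b)"
    and sym: "\<And>i j. h x i j = h x j i"
    and dif: "\<And>i j. (\<lambda>q. h q i j) differentiable at x"
  shows "cov_deriv (cone_metric h) (cone_phi J) (cone_pt t x) a k j =
    (case a of
       Inl _ \<Rightarrow> 0
     | Inr i \<Rightarrow> (case (k, j) of
         (Inr k', Inr j') \<Rightarrow> cov_deriv h J x i k' j'
       | (Inl _, Inr j') \<Rightarrow> - t * assoc_metric (h x) (J x) i j'
       | (Inr k', Inl _) \<Rightarrow> - J x k' i / t
       | _ \<Rightarrow> 0))"
  by (cases a; cases k; cases j)
     (simp_all add: cov_deriv_def sum_UNIV_unit_plus christoffel_cone[where h=h and x=x, OF t inv sym dif]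
      cone_phi_cone_pt pd_cone_phi_Inl pd_cone_phi_Inr assoc_metric_def
      if_distrib[of "\<lambda>y. y * _"] sum_negf sum_distrib_left mult.assoc cong: if_cong)

section \<open>The square norm of \<open>\<nabla>\<phi>\<close> on the cone\<close>

lemma sq_norm_cov_nested:
  "sq_norm_cov G A p = (\<Sum>i\<in>UNIV. \<Sum>j\<in>UNIV. inv_metric G p i j *
     (\<Sum>k\<in>UNIV. \<Sum>s\<in>UNIV. inv_metric G p k s *
        (\<Sum>a\<in>UNIV. \<Sum>b\<in>UNIV. G p a b * cov_deriv G A p i a k * cov_deriv G A p j b s)))"
  unfolding sq_norm_cov_def by (simp add: sum_distrib_left mult.assoc)

lemma cone_metric_pairing:
  "(\<Sum>a\<in>UNIV. \<Sum>b\<in>UNIV. cone_metric h (cone_pt t x) a b * X a * Y b)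
     = X (Inl ()) * Y (Inl ()) + t^2 * (\<Sum>i\<in>UNIV. \<Sum>j\<in>UNIV. h x i j * X (Inr i) * Y (Inr j))"
  by (simp add: sum_UNIV_unit_plus cone_metric_cone_pt sum_distrib_left mult.assoc)

lemma cone_inv_metric_contraction:
  fixes h :: "real^'n \<Rightarrow> 'n \<Rightarrow> 'n \<Rightarrow> real"
  assumes "t > 0" and "invertible (\<chi> a b. h x a b)"
  shows "(\<Sum>a\<in>UNIV. \<Sum>b\<in>UNIV. inv_metric (cone_metric h) (cone_pt t x) a b * F a b)
     = F (Inl ()) (Inl ()) + (\<Sum>i\<in>UNIV. \<Sum>j\<in>UNIV. inv_metric h x i j * F (Inr i) (Inr j)) / t^2"
  by (simp add: sum_UNIV_unit_plus inv_metric_cone[where h=h and x=x, OF assms] sum_divide_distrib)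

lemma sq_norm_cov_cone:
  fixes h J :: "real^'n \<Rightarrow> 'n \<Rightarrow> 'n \<Rightarrow> real"
  assumes t: "t > 0" and inv: "invertible (\<chi> a b. h x a b)"
    and sym: "\<And>i j. h x i j = h x j i"
    and dif: "\<And>i j. (\<lambda>q. h q i j) differentiable at x"
  shows "sq_norm_cov (cone_metric h) (cone_phi J) (cone_pt t x) =
    (sq_norm_cov h J x
     + (\<Sum>i\<in>UNIV. \<Sum>j\<in>UNIV. \<Sum>k\<in>UNIV. \<Sum>s\<in>UNIV. inv_metric h x i j * inv_metric h x k s *
          (assoc_metric (h x) (J x) i k * assoc_metric (h x) (J x) j s))
     + (\<Sum>i\<in>UNIV. \<Sum>j\<in>UNIV. inv_metric h x i j * (\<Sum>a\<in>UNIV. \<Sum>b\<in>UNIV. h x a b * J x a i * J x b j)))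
    / t^2"
proof -
  let ?g = "cone_metric h" and ?D' = "cov_deriv (cone_metric h) (cone_phi J) (cone_pt t x)"
  let ?H = "inv_metric h x" and ?D = "cov_deriv h J x" and ?B = "assoc_metric (h x) (J x)"
  note contract = cone_inv_metric_contraction[where h=h and x=x, OF t inv]
  note cov = cov_deriv_cone[where h=h and x=x, OF t inv sym dif]
  have inner: "(\<Sum>k\<in>UNIV. \<Sum>s\<in>UNIV. inv_metric ?g (cone_pt t x) k s *
        (\<Sum>a\<in>UNIV. \<Sum>b\<in>UNIV. ?g (cone_pt t x) a b * ?D' (Inr i) a k * ?D' (Inr j) b s))
      = (\<Sum>a\<in>UNIV. \<Sum>b\<in>UNIV. h x a b * J x a i * J x b j)
        + (\<Sum>k\<in>UNIV. \<Sum>s\<in>UNIV. ?H k s * (\<Sum>a\<in>UNIV. \<Sum>b\<in>UNIV. h x a b * ?D i a k * ?D j b s))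
        + (\<Sum>k\<in>UNIV. \<Sum>s\<in>UNIV. ?H k s * (?B i k * ?B j s))" for i j
    using t by (simp only: contract cone_metric_pairing cov)
      (simp add: power2_eq_square field_simps sum_divide_distrib sum.distrib sum_distrib_left)
  have outer: "sq_norm_cov ?g (cone_phi J) (cone_pt t x) = (\<Sum>i\<in>UNIV. \<Sum>j\<in>UNIV. ?H i j *
      (\<Sum>k\<in>UNIV. \<Sum>s\<in>UNIV. inv_metric ?g (cone_pt t x) k s *
        (\<Sum>a\<in>UNIV. \<Sum>b\<in>UNIV. ?g (cone_pt t x) a b * ?D' (Inr i) a k * ?D' (Inr j) b s))) / t^2"
    unfolding sq_norm_cov_nested by (subst contract) (simp add: cov)
  show ?thesis
    unfolding outer inner sq_norm_cov_nested[of h J x]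
    by (simp add: distrib_left sum.distrib sum_distrib_left mult.assoc add_ac)
qed

lemma sq_norm_cov_cone_norden:
  fixes J h :: "real^'n \<Rightarrow> 'n \<Rightarrow> 'n \<Rightarrow> real"
  assumes N: "almost_norden_on U J h" and x: "x \<in> U" and t: "t > 0"
  shows "sq_norm_cov (cone_metric h) (cone_phi J) (cone_pt t x) =
         (sq_norm_cov h J x - 2 * real CARD('n)) / t^2"
proof -
  interpret norden_form "h x" "inv_metric h x" "J x"
    using almost_norden_on_norden_form[OF N x] .
  have inv: "invertible (\<chi> a b. h x a b)"
    using N x unfolding almost_norden_on_def by blast
  show ?thesis
    using sq_norm_cov_cone[OF t inv h_sym almost_norden_on_differentiable_at[OF N x], of J]
    by (simp add: trace_assoc_metric_square trace_h_J_J)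
qed

theorem theorem3p2:
  fixes U :: "(real^2) set" and J h :: "real^2 \<Rightarrow> 2 \<Rightarrow> 2 \<Rightarrow> real"
  assumes "almost_norden_on U J h"
  shows "(isotropic_cosymplectic_cone U J h \<longleftrightarrow> (\<forall>x\<in>U. sq_norm_cov h J x = 4))
       \<and> (isotropic_kaehler_norden U J h \<longleftrightarrow>
           (\<forall>t>0. \<forall>x\<in>U. sq_norm_cov (cone_metric h) (cone_phi J) (cone_pt t x) = - 4 / t^2))"
proof -
  have cone: "sq_norm_cov (cone_metric h) (cone_phi J) (cone_pt t x) = (sq_norm_cov h J x - 4) / t^2"
    if "x \<in> U" and "t > 0" for x t
    using sq_norm_cov_cone_norden[OF assms that] by simp
  show ?thesis
    unfolding isotropic_cosymplectic_cone_def isotropic_kaehler_norden_def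
    using gt_ex[of "0::real"] by (auto simp: cone diff_divide_distrib)
qed

end
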